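(* Let $\Lambda$ be a qubit channel (completely positive trace-preserving map on $2\times2$ density matrices). There exists a two-qubit state $\rho$ such that $\mathcal C\big((\mathrm{id}_A\otimes\Lambda)(\rho)\big)>\mathcal C(\rho)$ if and only if $\Lambda$ is neither unital nor semi-classical.
   Context: For a two-qubit state $\rho$ on $\mathcal H_A\otimes\mathcal H_B$ and a POVM element $M$ on $\mathcal H_A$ ($0\le M\le \mathbb 1$) with $p_M:=\mathrm{tr}(M\otimes\mathbb 1\,\rho)>0$, Bob's steered state is $\rho_B^M:=\mathrm{tr}_A(M\otimes\mathbb 1\,\rho)/p_M$. The maximal steered coherence is $$\mathcal C(\rho)=\inf_{\Xi}\ \max_{M}\ \frac{1}{p_M}\sum_{i\neq j}\big|\langle\xi_i|\mathrm{tr}_A(M\otimes \mathbb 1\,\rho)|\xi_j\rangle\big|,$$ where the infimum is over all orthonormal eigenbases $\Xi=\{|\xi_i\rangle\}$ of $\rho_B=\mathrm{tr}_A\rho$ (unique up to phases when $\rho_B$ is non-degenerate) and the maximum is over POVM elements $M$ on $\mathcal H_A$ with $p_M>0$. A channel $\Lambda$ is unital if $\Lambda(\mathbb 1)=\mathbb 1$. It is semi-classical if there is a fixed orthonormal basis $\{|k\rangle\}$ such that for every input state $\rho$, $\Lambda(\rho)=\sum_k p_k(\rho)|k\rangle\langle k|$ for some probabilities $p_k(\rho)$. *)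

theory Defs
  imports Complex_Main
begin

text \<open>A qubit has basis indexed by bool; a two-qubit system (A,B) by bool \<times> bool,
  with first component the A index and second component the B index.\<close>

type_synonym 'i cmat = "'i \<Rightarrow> 'i \<Rightarrow> complex"
type_synonym 'i cvec = "'i \<Rightarrow> complex"

definition qform_on :: "'i set \<Rightarrow> 'i cmat \<Rightarrow> 'i cvec \<Rightarrow> complex" where
  "qform_on I A v = (\<Sum>i\<in>I. \<Sum>j\<in>I. cnj (v i) * A i j * v j)"

text \<open>Positive semidefinite on the (finite) index set I: the quadratic form is real and
  nonnegative for all complex vectors (this includes hermiticity).\<close>
definition psd_on :: "'i set \<Rightarrow> 'i cmat \<Rightarrow> bool" where
  "psd_on I A \<longleftrightarrow> (\<forall>v. Im (qform_on I A v) = 0 \<and> Re (qform_on I A v) \<ge> 0)"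

abbreviation psd :: "('i::finite) cmat \<Rightarrow> bool" where
  "psd A \<equiv> psd_on UNIV A"

definition trace :: "('i::finite) cmat \<Rightarrow> complex" where
  "trace A = (\<Sum>i\<in>UNIV. A i i)"

definition idm :: "'i cmat" where
  "idm = (\<lambda>i j. if i = j then 1 else 0)"

definition density :: "('i::finite) cmat \<Rightarrow> bool" where
  "density A \<longleftrightarrow> psd A \<and> trace A = 1"

definition povm_elem :: "('i::finite) cmat \<Rightarrow> bool" where
  "povm_elem M \<longleftrightarrow> psd M \<and> psd (\<lambda>i j. idm i j - M i j)"

definition inner :: "('i::finite) cvec \<Rightarrow> 'i cvec \<Rightarrow> complex" where
  "inner u v = (\<Sum>k\<in>UNIV. cnj (u k) * v k)"

definition sandwich :: "('i::finite) cvec \<Rightarrow> 'i cmat \<Rightarrow> 'i cvec \<Rightarrow> complex" where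
  "sandwich u A v = (\<Sum>k\<in>UNIV. \<Sum>l\<in>UNIV. cnj (u k) * A k l * v l)"

definition mat_vec :: "('i::finite) cmat \<Rightarrow> 'i cvec \<Rightarrow> 'i cvec" where
  "mat_vec A v = (\<lambda>k. \<Sum>l\<in>UNIV. A k l * v l)"

definition orthonormal_basis :: "(bool \<Rightarrow> bool cvec) \<Rightarrow> bool" where
  "orthonormal_basis \<xi> \<longleftrightarrow> (\<forall>k l. inner (\<xi> k) (\<xi> l) = (if k = l then 1 else 0))"

definition eigenbasis :: "bool cmat \<Rightarrow> (bool \<Rightarrow> bool cvec) \<Rightarrow> bool" where
  "eigenbasis A \<xi> \<longleftrightarrow> orthonormal_basis \<xi> \<and>
     (\<forall>k. \<exists>c::complex. mat_vec A (\<xi> k) = (\<lambda>l. c * \<xi> k l))"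

definition ptrA :: "('a::finite \<times> 'b) cmat \<Rightarrow> 'b cmat" where
  "ptrA X = (\<lambda>i j. \<Sum>a\<in>UNIV. X (a, i) (a, j))"

definition tensor_id_mult :: "('a::finite) cmat \<Rightarrow> ('a \<times> 'b) cmat \<Rightarrow> ('a \<times> 'b) cmat" where
  "tensor_id_mult M X = (\<lambda>(a, i) (b, j). \<Sum>c\<in>UNIV. M a c * X (c, i) (b, j))"

definition id_tensor :: "('b cmat \<Rightarrow> 'c cmat) \<Rightarrow> ('a \<times> 'b) cmat \<Rightarrow> ('a \<times> 'c) cmat" where
  "id_tensor \<Lambda> X = (\<lambda>(a, i) (b, j). \<Lambda> (\<lambda>k l. X (a, k) (b, l)) i j)"

definition steered :: "bool cmat \<Rightarrow> (bool \<times> bool) cmat \<Rightarrow> bool cmat" where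
  "steered M \<rho> = ptrA (tensor_id_mult M \<rho>)"

definition prob_M :: "bool cmat \<Rightarrow> (bool \<times> bool) cmat \<Rightarrow> real" where
  "prob_M M \<rho> = Re (trace (tensor_id_mult M \<rho>))"

definition steered_coherence :: "(bool \<times> bool) cmat \<Rightarrow> real" where
  "steered_coherence \<rho> =
     (INF \<xi>\<in>{\<xi>. eigenbasis (ptrA \<rho>) \<xi>}.
        SUP M\<in>{M. povm_elem M \<and> prob_M M \<rho> > 0}.
          (1 / prob_M M \<rho>) *
            (\<Sum>(i, j)\<in>{(i, j). i \<noteq> j}. cmod (sandwich (\<xi> i) (steered M \<rho>) (\<xi> j))))"

definition linear_map :: "('b cmat \<Rightarrow> 'c cmat) \<Rightarrow> bool" where
  "linear_map \<Lambda> \<longleftrightarrow> (\<forall>a b X Y. \<Lambda> (\<lambda>i j. a * X i j + b * Y i j) =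
                                   (\<lambda>i j. a * \<Lambda> X i j + b * \<Lambda> Y i j))"

definition completely_positive :: "(('b::finite) cmat \<Rightarrow> ('c::finite) cmat) \<Rightarrow> bool" where
  "completely_positive \<Lambda> \<longleftrightarrow>
     (\<forall>(n::nat) (X :: (nat \<times> 'b) cmat). psd_on ({..<n} \<times> UNIV) X \<longrightarrow>
        psd_on ({..<n} \<times> UNIV) (id_tensor \<Lambda> X))"

definition trace_preserving :: "(('b::finite) cmat \<Rightarrow> ('c::finite) cmat) \<Rightarrow> bool" where
  "trace_preserving \<Lambda> \<longleftrightarrow> (\<forall>X. trace (\<Lambda> X) = trace X)"

definition qubit_channel :: "(bool cmat \<Rightarrow> bool cmat) \<Rightarrow> bool" where
  "qubit_channel \<Lambda> \<longleftrightarrow> linear_map \<Lambda> \<and> completely_positive \<Lambda> \<and> trace_preserving \<Lambda>"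

definition unital :: "(bool cmat \<Rightarrow> bool cmat) \<Rightarrow> bool" where
  "unital \<Lambda> \<longleftrightarrow> \<Lambda> idm = idm"

definition semi_classical :: "(bool cmat \<Rightarrow> bool cmat) \<Rightarrow> bool" where
  "semi_classical \<Lambda> \<longleftrightarrow> (\<exists>e. orthonormal_basis e \<and>
     (\<forall>\<rho>. density \<rho> \<longrightarrow> (\<exists>p :: bool \<Rightarrow> real. (\<forall>k. p k \<ge> 0) \<and> (\<Sum>k\<in>UNIV. p k) = 1 \<and>
        \<Lambda> \<rho> = (\<lambda>i j. \<Sum>k\<in>UNIV. complex_of_real (p k) * e k i * cnj (e k j)))))"

end

theory Submission
  imports Defs
begin

text \<open>
  Write Bob's qubit operators as \<open>x\<^sub>0 \<one> + x \<cdot> \<sigma>\<close>. A qubit channel then acts on Bloch vectors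
  affinely, \<open>x \<mapsto> t + T x\<close> with \<open>T\<close> linear, and it is unital iff \<open>t = 0\<close>. If a steered state has
  weight \<open>p\<close> and Bloch vector \<open>x\<close>, its l1-coherence in an eigenbasis of Bob's marginal with Bloch axis
  \<open>n\<close> is \<open>2 |x \<times> n| / p\<close>.

  For a unital channel \<open>T\<close> is a contraction; moving the axis \<open>n\<close> to the direction of \<open>T n\<close> gives an
  eigenbasis of the output marginal in which every steered state has no more coherence than before.
  For a semi-classical channel all outputs are diagonal in one fixed basis, which is also an
  eigenbasis of the output marginal, so the output has no steered coherence at all. Conversely, if
  \<open>t \<noteq> 0\<close> and some \<open>T u\<close> with \<open>u\<close> a unit vector is not parallel to \<open>t\<close>, the classically correlated state
  \<open>(|0\<rangle>\<langle>0| \<otimes> |u\<rangle>\<langle>u| + |1\<rangle>\<langle>1| \<otimes> |u\<^sup>\<bottom>\<rangle>\<langle>u\<^sup>\<bottom>|) / 2\<close> has no steered coherence, while after the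
  channel the marginal's eigenbasis is forced onto the axis of \<open>t\<close> and the state steered by
  \<open>|0\<rangle>\<langle>0|\<close> has coherence \<open>|T u \<times> t| / |t| > 0\<close>.
\<close>

lemma sum_UNIV_bool: "(\<Sum>x\<in>(UNIV::bool set). f x) = f False + f True"
  by (simp add: UNIV_bool)

lemma sum_UNIV_prod:
  "(\<Sum>x\<in>(UNIV::('a::finite \<times> 'b::finite) set). f x) = (\<Sum>a\<in>UNIV. \<Sum>b\<in>UNIV. f (a, b))"
  by (simp add: sum.cartesian_product UNIV_Times_UNIV[symmetric] del: UNIV_Times_UNIV)

datatype vec3 = Vec3 (vx: real) (vy: real) (vz: real)

lemma vec3_eq_iff: "x = y \<longleftrightarrow> vx x = vx y \<and> vy x = vy y \<and> vz x = vz y"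
  by (cases x; cases y) simp

instantiation vec3 :: real_vector
begin

definition "0 = Vec3 0 0 0"
definition "x + y = Vec3 (vx x + vx y) (vy x + vy y) (vz x + vz y)"
definition "x - y = Vec3 (vx x - vx y) (vy x - vy y) (vz x - vz y)"
definition "- x = Vec3 (- vx x) (- vy x) (- vz x)"
definition "r *\<^sub>R x = Vec3 (r * vx x) (r * vy x) (r * vz x)"

instance
  by standard (simp_all add: vec3_eq_iff zero_vec3_def plus_vec3_def minus_vec3_def
      uminus_vec3_def scaleR_vec3_def algebra_simps)

end

lemma vec3_components [simp]:
  "vx 0 = 0" "vy 0 = 0" "vz 0 = 0"
  "vx (x + y) = vx x + vx y" "vy (x + y) = vy x + vy y" "vz (x + y) = vz x + vz y"
  "vx (x - y) = vx x - vx y" "vy (x - y) = vy x - vy y" "vz (x - y) = vz x - vz y"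
  "vx (- x) = - vx x" "vy (- x) = - vy x" "vz (- x) = - vz x"
  "vx (r *\<^sub>R x) = r * vx x" "vy (r *\<^sub>R x) = r * vy x" "vz (r *\<^sub>R x) = r * vz x"
  by (simp_all add: zero_vec3_def plus_vec3_def minus_vec3_def uminus_vec3_def scaleR_vec3_def)

definition dot :: "vec3 \<Rightarrow> vec3 \<Rightarrow> real" where
  "dot x y = vx x * vx y + vy x * vy y + vz x * vz y"

definition cross :: "vec3 \<Rightarrow> vec3 \<Rightarrow> vec3" where
  "cross x y = Vec3 (vy x * vz y - vz x * vy y) (vz x * vx y - vx x * vz y) (vx x * vy y - vy x * vx y)"

definition sqnorm :: "vec3 \<Rightarrow> real" where
  "sqnorm x = dot x x"

lemma dot_commute: "dot x y = dot y x"
  by (simp add: dot_def algebra_simps)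

lemma dot_add_left [simp]: "dot (x + y) z = dot x z + dot y z"
  and dot_add_right [simp]: "dot z (x + y) = dot z x + dot z y"
  and dot_diff_left [simp]: "dot (x - y) z = dot x z - dot y z"
  and dot_diff_right [simp]: "dot z (x - y) = dot z x - dot z y"
  and dot_minus_left [simp]: "dot (- x) y = - dot x y"
  and dot_minus_right [simp]: "dot x (- y) = - dot x y"
  and dot_scaleR_left [simp]: "dot (r *\<^sub>R x) y = r * dot x y"
  and dot_scaleR_right [simp]: "dot x (r *\<^sub>R y) = r * dot x y"
  by (simp_all add: dot_def algebra_simps)

lemma dot_zero_left [simp]: "dot 0 y = 0"
  and dot_zero_right [simp]: "dot x 0 = 0"
  by (simp_all add: dot_def)

lemma cross_add_left [simp]: "cross (x + y) z = cross x z + cross y z"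
  and cross_add_right [simp]: "cross z (x + y) = cross z x + cross z y"
  and cross_diff_left [simp]: "cross (x - y) z = cross x z - cross y z"
  and cross_scaleR_left [simp]: "cross (r *\<^sub>R x) y = r *\<^sub>R cross x y"
  and cross_scaleR_right [simp]: "cross x (r *\<^sub>R y) = r *\<^sub>R cross x y"
  and cross_zero_left [simp]: "cross 0 y = 0"
  and cross_zero_right [simp]: "cross x 0 = 0"
  and cross_self [simp]: "cross x x = 0"
  by (simp_all add: vec3_eq_iff cross_def algebra_simps)

lemma cross_commute: "cross x y = - cross y x"
  by (simp add: vec3_eq_iff cross_def)

lemma sqnorm_nonneg [simp]: "0 \<le> sqnorm x"
  by (simp add: sqnorm_def dot_def)

lemma sqnorm_zero [simp]: "sqnorm 0 = 0"
  by (simp add: sqnorm_def)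

lemma sqnorm_minus [simp]: "sqnorm (- x) = sqnorm x"
  by (simp add: sqnorm_def)

lemma sqnorm_eq_0_iff [simp]: "sqnorm x = 0 \<longleftrightarrow> x = 0"
  by (simp add: sqnorm_def dot_def vec3_eq_iff add_nonneg_eq_0_iff)

lemma sqnorm_pos_iff: "0 < sqnorm x \<longleftrightarrow> x \<noteq> 0"
  using sqnorm_nonneg[of x] sqnorm_eq_0_iff[of x] by linarith

lemma sqnorm_scaleR [simp]: "sqnorm (r *\<^sub>R x) = r\<^sup>2 * sqnorm x"
  by (simp add: sqnorm_def power2_eq_square)

lemma sqnorm_normalize: "x \<noteq> 0 \<Longrightarrow> sqnorm ((1 / sqrt (sqnorm x)) *\<^sub>R x) = 1"
  by (simp add: power_divide sqnorm_pos_iff less_imp_neq)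

lemma lagrange_identity: "sqnorm x * sqnorm y = (dot x y)\<^sup>2 + sqnorm (cross x y)"
  by (simp add: sqnorm_def dot_def cross_def power2_eq_square algebra_simps)

lemma abs_dot_le: "\<bar>dot x y\<bar> \<le> sqrt (sqnorm x) * sqrt (sqnorm y)"
proof -
  have "(dot x y)\<^sup>2 \<le> sqnorm x * sqnorm y"
    using lagrange_identity[of x y] sqnorm_nonneg[of "cross x y"] by linarith
  then show ?thesis
    by (metis real_sqrt_abs real_sqrt_le_mono real_sqrt_mult)
qed

lemma sqnorm_minus_dot_square: "sqnorm n = 1 \<Longrightarrow> sqnorm x - (dot x n)\<^sup>2 = sqnorm (cross x n)"
  using lagrange_identity[of x n] by simp

lemma sqnorm_cross_le: "sqnorm n = 1 \<Longrightarrow> sqnorm (cross x n) \<le> sqnorm x"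
  using lagrange_identity[of x n] zero_le_power2[of "dot x n"] by simp

lemma cross_eq_0_imp_parallel:
  assumes "sqnorm n = 1" "cross x n = 0"
  shows "x = dot x n *\<^sub>R n"
proof -
  have "sqnorm (x - dot x n *\<^sub>R n) = sqnorm x - (dot x n)\<^sup>2"
    using assms(1) by (simp add: sqnorm_def dot_commute[of n x] power2_eq_square algebra_simps)
  also have "\<dots> = 0"
    using sqnorm_minus_dot_square[OF assms(1)] assms(2) by simp
  finally show ?thesis by simp
qed

lemma ex_unit_cross_eq_0: "\<exists>m. sqnorm m = 1 \<and> cross x m = 0"
proof (cases "x = 0")
  case True
  then show ?thesis
    by (intro exI[of _ "Vec3 0 0 1"]) (simp add: sqnorm_def dot_def)
next
  case False
  then show ?thesis
    using sqnorm_normalize[OF False] by (intro exI[of _ "(1 / sqrt (sqnorm x)) *\<^sub>R x"]) simp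
qed

lemma sqnorm_cross_contraction:
  assumes "linear T" "\<And>y. sqnorm (T y) \<le> sqnorm y"
    and n: "sqnorm n = 1" and m: "sqnorm m = 1" and "cross (T n) m = 0"
  shows "sqnorm (cross (T x) m) \<le> sqnorm (cross x n)"
proof -
  define y where "y = x - dot x n *\<^sub>R n"
  have "dot y n = 0"
    using n by (simp add: y_def sqnorm_def)
  moreover have "cross y n = cross x n"
    by (simp add: y_def)
  ultimately have "sqnorm (cross x n) = sqnorm y"
    using lagrange_identity[of y n] n by simp
  moreover have "cross (T x) m = cross (T y) m"
    using assms(5) by (simp add: y_def linear_diff[OF assms(1)] linear_scale[OF assms(1)])
  ultimately show ?thesis
    using sqnorm_cross_le[OF m, of "T y"] assms(2)[of y] by simp
qed

lemma sqnorm_cross_parallel: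
  assumes "sqnorm n = 1" "cross t n = 0"
  shows "sqnorm (cross y t) = sqnorm t * sqnorm (cross y n)"
proof -
  have "t = dot t n *\<^sub>R n"
    using cross_eq_0_imp_parallel[OF assms] .
  then have "sqnorm (cross y t) = (dot t n)\<^sup>2 * sqnorm (cross y n)" and "sqnorm t = (dot t n)\<^sup>2"
    using assms(1) by (metis cross_scaleR_right sqnorm_scaleR mult_1_right)+
  then show ?thesis
    by simp
qed

text \<open>\<open>pauli_mat x0 x\<close> is \<open>x0 \<one> + x1 \<sigma>x + x2 \<sigma>y + x3 \<sigma>z\<close>, the index \<open>False\<close> labelling \<open>|0\<rangle>\<close>.\<close>
definition pauli_mat :: "real \<Rightarrow> vec3 \<Rightarrow> bool cmat" where
  "pauli_mat x0 x = (\<lambda>i j.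
     if i then (if j then of_real (x0 - vz x) else Complex (vx x) (vy x))
     else (if j then Complex (vx x) (- vy x) else of_real (x0 + vz x)))"

lemma pauli_mat_apply [simp]:
  "pauli_mat x0 x False False = of_real (x0 + vz x)"
  "pauli_mat x0 x False True = Complex (vx x) (- vy x)"
  "pauli_mat x0 x True False = Complex (vx x) (vy x)"
  "pauli_mat x0 x True True = of_real (x0 - vz x)"
  by (simp_all add: pauli_mat_def)

definition hermitian :: "'i cmat \<Rightarrow> bool" where
  "hermitian X \<longleftrightarrow> (\<forall>i j. X j i = cnj (X i j))"

definition pauli_scalar :: "bool cmat \<Rightarrow> real" where
  "pauli_scalar X = Re (trace X) / 2"

definition pauli_vec :: "bool cmat \<Rightarrow> vec3" where
  "pauli_vec X = Vec3 (Re (X True False)) (Im (X True False)) (Re (X False False - X True True) / 2)"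

lemma trace_bool: "trace (X :: bool cmat) = X False False + X True True"
  by (simp add: trace_def sum_UNIV_bool)

lemma trace_pauli_mat [simp]: "trace (pauli_mat x0 x) = of_real (2 * x0)"
  by (simp add: trace_bool)

lemma pauli_scalar_pauli_mat [simp]: "pauli_scalar (pauli_mat x0 x) = x0"
  by (simp add: pauli_scalar_def)

lemma pauli_vec_pauli_mat [simp]: "pauli_vec (pauli_mat x0 x) = x"
  by (simp add: pauli_vec_def vec3_eq_iff)

lemma hermitian_pauli_mat: "hermitian (pauli_mat x0 x)"
  by (simp add: hermitian_def all_bool_eq complex_eq_iff)

lemma hermitian_eq_pauli_mat:
  assumes "hermitian X"
  shows "X = pauli_mat (pauli_scalar X) (pauli_vec X)"
proof -
  have h: "X j i = cnj (X i j)" for i j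
    using assms unfolding hermitian_def by blast
  have "Im (X i i) = 0" for i
    using arg_cong[OF h[of i i], of Im] by simp
  with h[of True False] show ?thesis
    unfolding pauli_mat_def pauli_scalar_def pauli_vec_def trace_bool
    by (intro ext) (simp add: complex_eq_iff field_simps)
qed

lemma hermitianE:
  assumes "hermitian X"
  obtains x0 x where "X = pauli_mat x0 x"
  using hermitian_eq_pauli_mat[OF assms] by blast

lemma hermitian_lincomb:
  assumes "hermitian A" "hermitian B"
  shows "hermitian (\<lambda>i j. of_real a * A i j + of_real b * B i j)"
  unfolding hermitian_def
proof (intro allI)
  fix i j
  have "A j i = cnj (A i j)" "B j i = cnj (B i j)"
    using assms unfolding hermitian_def by blast+
  then show "of_real a * A j i + of_real b * B j i = cnj (of_real a * A i j + of_real b * B i j)"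
    by simp
qed

lemma pauli_mat_lincomb:
  "(\<lambda>i j. of_real a * pauli_mat p x i j + of_real b * pauli_mat q y i j)
     = pauli_mat (a * p + b * q) (a *\<^sub>R x + b *\<^sub>R y)"
  by (intro ext) (auto simp: pauli_mat_def complex_eq_iff algebra_simps)

lemma pauli_mat_scale: "(\<lambda>i j. of_real a * pauli_mat p x i j) = pauli_mat (a * p) (a *\<^sub>R x)"
  using pauli_mat_lincomb[of a p x 0 q y] by simp

lemma idm_eq_pauli_mat: "idm = pauli_mat 1 0"
  by (intro ext) (auto simp: idm_def pauli_mat_def complex_eq_iff)

definition ket_sqnorm :: "bool cvec \<Rightarrow> real" where
  "ket_sqnorm v = (cmod (v False))\<^sup>2 + (cmod (v True))\<^sup>2"

definition bloch :: "bool cvec \<Rightarrow> vec3" where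
  "bloch v = Vec3 (2 * Re (v True * cnj (v False))) (2 * Im (v True * cnj (v False)))
     ((cmod (v False))\<^sup>2 - (cmod (v True))\<^sup>2)"

lemma qubit_coords:
  obtains a1 a2 c1 c2 where "v False = Complex a1 a2" "v True = Complex c1 c2"
    "ket_sqnorm v = a1 * a1 + a2 * a2 + c1 * c1 + c2 * c2"
    "bloch v = Vec3 (2 * (c1 * a1 + c2 * a2)) (2 * (c2 * a1 - c1 * a2))
                 (a1 * a1 + a2 * a2 - c1 * c1 - c2 * c2)"
proof -
  obtain a1 a2 c1 c2 where "v False = Complex a1 a2" "v True = Complex c1 c2"
    by (metis complex.exhaust)
  then show thesis
    by (intro that) (simp_all only: ket_sqnorm_def bloch_def cmod_power2, simp_all add: power2_eq_square)
qed

lemma ket_sqnorm_nonneg [simp]: "0 \<le> ket_sqnorm v"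
  by (simp add: ket_sqnorm_def)

lemma sqnorm_bloch: "sqnorm (bloch v) = (ket_sqnorm v)\<^sup>2"
  by (rule qubit_coords[of v]) (simp add: sqnorm_def dot_def power2_eq_square algebra_simps)

lemma qform_pauli_mat: "qform_on UNIV (pauli_mat x0 x) v = of_real (x0 * ket_sqnorm v + dot x (bloch v))"
  by (rule qubit_coords[of v])
    (simp add: qform_on_def sum_UNIV_bool dot_def complex_eq_iff algebra_simps)

definition ket :: "complex \<Rightarrow> complex \<Rightarrow> bool cvec" where
  "ket a b = (\<lambda>k. if k then b else a)"

text \<open>The half-angle parametrisation of the Bloch sphere, with the south pole treated apart.\<close>
lemma bloch_surj:
  assumes "sqnorm m = 1"
  shows "\<exists>v. ket_sqnorm v = 1 \<and> bloch v = m"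
proof (cases "vz m = -1")
  case True
  then have "vx m = 0" "vy m = 0"
    using assms by (auto simp: sqnorm_def dot_def add_nonneg_eq_0_iff)
  then show ?thesis
    using True by (intro exI[of _ "ket 0 1"]) (simp add: ket_def ket_sqnorm_def bloch_def vec3_eq_iff)
next
  case False
  have sphere: "vx m * vx m + vy m * vy m = 1 - vz m * vz m"
    using assms by (simp add: sqnorm_def dot_def)
  then have "vz m * vz m \<le> 1"
    using zero_le_square[of "vx m"] zero_le_square[of "vy m"] by linarith
  then have m3: "vz m > -1"
    using False abs_square_le_1[of "vz m"] by (simp add: power2_eq_square)
  define a where "a = sqrt ((1 + vz m) / 2)"
  have a0: "a > 0" and a2: "a * a = (1 + vz m) / 2"
    using m3 by (simp_all add: a_def)
  have "vx m * vx m + vy m * vy m = (a * a) * (2 * (1 - vz m))"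
    unfolding sphere a2 by (simp add: algebra_simps)
  then have m12: "(vx m * vx m + vy m * vy m) / (4 * (a * a)) = (1 - vz m) / 2"
    using a0 by simp
  define v where "v = ket (of_real a) (Complex (vx m / (2 * a)) (vy m / (2 * a)))"
  have "ket_sqnorm v = a * a + (vx m * vx m + vy m * vy m) / (4 * (a * a))"
    unfolding v_def ket_def ket_sqnorm_def cmod_power2 by (simp add: power2_eq_square add_divide_distrib)
  then have "ket_sqnorm v = 1"
    by (simp only: m12) (simp add: a2 field_simps)
  moreover have "bloch v = Vec3 (vx m) (vy m) (a * a - (vx m * vx m + vy m * vy m) / (4 * (a * a)))"
    unfolding v_def ket_def bloch_def cmod_power2 using a0
    by (simp add: power2_eq_square add_divide_distrib)
  then have "bloch v = m"
    by (simp only: m12) (simp add: a2 vec3_eq_iff field_simps)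
  ultimately show ?thesis by blast
qed

lemma qform_ket:
  "qform_on UNIV X (ket a b)
     = cnj a * X False False * a + cnj a * X False True * b + cnj b * X True False * a + cnj b * X True True * b"
  by (simp add: qform_on_def sum_UNIV_bool ket_def)

lemma psd_hermitian:
  assumes "psd (X :: bool cmat)"
  shows "hermitian X"
proof -
  have im: "Im (qform_on UNIV X v) = 0" for v
    using assms by (simp add: psd_on_def)
  have "Im (X False False) = 0" "Im (X True True) = 0"
    using im[of "ket 1 0"] im[of "ket 0 1"] by (simp_all add: qform_ket)
  moreover from this have "Im (X False True) + Im (X True False) = 0"
    "Re (X False True) - Re (X True False) = 0"
    using im[of "ket 1 1"] im[of "ket 1 \<i>"] by (simp_all add: qform_ket)
  ultimately show ?thesis
    by (simp add: hermitian_def all_bool_eq complex_eq_iff)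
qed

lemma psd_pauli_mat_iff: "psd (pauli_mat x0 x) \<longleftrightarrow> sqrt (sqnorm x) \<le> x0"
proof
  assume psd: "psd (pauli_mat x0 x)"
  have form: "0 \<le> x0 * ket_sqnorm v + dot x (bloch v)" for v
    using psd by (simp add: psd_on_def qform_pauli_mat)
  show "sqrt (sqnorm x) \<le> x0"
  proof (cases "x = 0")
    case True
    then show ?thesis
      using form[of "ket 1 0"] by (simp add: ket_sqnorm_def ket_def)
  next
    case False
    have "sqnorm ((- 1 / sqrt (sqnorm x)) *\<^sub>R x) = 1"
      using sqnorm_normalize[OF False] by (simp add: power_divide)
    then obtain v where v: "ket_sqnorm v = 1" "bloch v = (- 1 / sqrt (sqnorm x)) *\<^sub>R x"
      using bloch_surj by blast
    have "sqnorm x / sqrt (sqnorm x) = sqrt (sqnorm x)"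
      by (metis sqnorm_nonneg real_div_sqrt)
    then show ?thesis
      using form[of v] v by (simp add: sqnorm_def)
  qed
next
  assume le: "sqrt (sqnorm x) \<le> x0"
  show "psd (pauli_mat x0 x)"
    unfolding psd_on_def qform_pauli_mat
  proof (intro allI conjI)
    fix v
    have "\<bar>dot x (bloch v)\<bar> \<le> sqrt (sqnorm x) * ket_sqnorm v"
      using abs_dot_le[of x "bloch v"] by (simp add: sqnorm_bloch)
    also have "\<dots> \<le> x0 * ket_sqnorm v"
      using le by (simp add: mult_right_mono)
    finally show "0 \<le> Re (of_real (x0 * ket_sqnorm v + dot x (bloch v)))"
      by simp
  qed simp
qed

lemma psd_scale:
  assumes "0 \<le> c" "psd (X :: bool cmat)"
  shows "psd (\<lambda>i j. of_real c * X i j)"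
proof -
  obtain x0 x where X: "X = pauli_mat x0 x"
    using hermitianE[OF psd_hermitian[OF assms(2)]] .
  have "sqrt (sqnorm x) \<le> x0"
    using assms(2) by (simp add: X psd_pauli_mat_iff)
  then show ?thesis
    using assms(1) by (simp add: X pauli_mat_scale psd_pauli_mat_iff real_sqrt_mult mult_left_mono)
qed

lemma density_eq_pauli_mat:
  assumes "density \<sigma>"
  shows "\<sigma> = pauli_mat (1 / 2) (pauli_vec \<sigma>)"
proof -
  have "psd \<sigma>" "trace \<sigma> = 1"
    using assms by (simp_all add: density_def)
  then show ?thesis
    using hermitian_eq_pauli_mat[OF psd_hermitian[of \<sigma>]] by (simp add: pauli_scalar_def)
qed

definition perp :: "bool cvec \<Rightarrow> bool cvec" where
  "perp v = (\<lambda>k. if k then cnj (v False) else - cnj (v True))"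

definition basis_of :: "bool cvec \<Rightarrow> bool \<Rightarrow> bool cvec" where
  "basis_of v = (\<lambda>b. if b then perp v else v)"

lemma inner_bool: "inner u v = cnj (u False) * v False + cnj (u True) * v True"
  by (simp add: inner_def sum_UNIV_bool)

lemma inner_self: "inner v v = of_real (ket_sqnorm v)"
  unfolding inner_bool ket_sqnorm_def of_real_add complex_norm_square by (simp add: mult.commute)

lemma inner_perp: "inner v (perp v) = 0" "inner (perp v) v = 0"
  by (simp_all add: inner_bool perp_def algebra_simps)

lemma ket_sqnorm_perp [simp]: "ket_sqnorm (perp v) = ket_sqnorm v"
  by (simp add: ket_sqnorm_def perp_def)

lemma bloch_perp [simp]: "bloch (perp v) = - bloch v"
  by (simp add: bloch_def perp_def vec3_eq_iff algebra_simps)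

lemma orthonormal_basis_of: "ket_sqnorm v = 1 \<Longrightarrow> orthonormal_basis (basis_of v)"
  by (simp add: orthonormal_basis_def basis_of_def inner_self inner_perp)

lemma ex_orthonormal_basis_bloch:
  "sqnorm m = 1 \<Longrightarrow> \<exists>\<xi>. orthonormal_basis \<xi> \<and> bloch (\<xi> False) = m"
  using bloch_surj orthonormal_basis_of by (metis basis_of_def)

lemma orthonormal_basisD:
  assumes "orthonormal_basis \<xi>"
  shows "ket_sqnorm (\<xi> False) = 1" "\<exists>c. cmod c = 1 \<and> \<xi> True = (\<lambda>k. c * perp (\<xi> False) k)"
proof -
  have i: "inner (\<xi> k) (\<xi> l) = (if k = l then 1 else 0)" for k l
    using assms by (simp add: orthonormal_basis_def)
  show "ket_sqnorm (\<xi> False) = 1"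
    using i[of False False] by (simp add: inner_self)
  define \<alpha> \<beta> \<gamma> \<delta> where "\<alpha> = \<xi> False False" "\<beta> = \<xi> False True" "\<gamma> = \<xi> True False" "\<delta> = \<xi> True True"
  have h1: "cnj \<alpha> * \<alpha> + cnj \<beta> * \<beta> = 1" and h2: "cnj \<gamma> * \<gamma> + cnj \<delta> * \<delta> = 1"
    and h3: "cnj \<alpha> * \<gamma> + cnj \<beta> * \<delta> = 0"
    using i[of False False] i[of True True] i[of False True] by (simp_all add: inner_bool \<alpha>_\<beta>_\<gamma>_\<delta>_def)
  define c where "c = \<delta> * \<alpha> - \<gamma> * \<beta>" \<comment> \<open>the determinant of the unitary with columns \<open>\<xi>\<close>\<close>
  have \<gamma>: "\<gamma> = c * (- cnj \<beta>)" and \<delta>: "\<delta> = c * cnj \<alpha>"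
    unfolding c_def using h1 h3 by algebra+
  have "c * cnj c = cnj \<gamma> * \<gamma> + cnj \<delta> * \<delta>"
    unfolding \<gamma> \<delta> complex_cnj_mult complex_cnj_minus complex_cnj_cnj using h1 by algebra
  then have "c * cnj c = 1"
    using h2 by simp
  then have "(cmod c)\<^sup>2 = 1"
    by (metis complex_norm_square of_real_eq_1_iff)
  then have "cmod c = 1"
    using norm_ge_zero[of c] by (auto simp: power2_eq_1_iff)
  moreover have "\<xi> True = (\<lambda>k. c * perp (\<xi> False) k)"
    using \<gamma> \<delta> by (intro ext) (simp add: perp_def \<alpha>_\<beta>_\<gamma>_\<delta>_def)
  ultimately show "\<exists>c. cmod c = 1 \<and> \<xi> True = (\<lambda>k. c * perp (\<xi> False) k)"
    by blast
qed

lemma sqnorm_bloch_basis: "orthonormal_basis \<xi> \<Longrightarrow> sqnorm (bloch (\<xi> False)) = 1"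
  using orthonormal_basisD(1) by (simp add: sqnorm_bloch)

lemma sandwich_eq_inner: "sandwich u X v = inner u (mat_vec X v)"
  by (simp add: sandwich_def inner_def mat_vec_def sum_distrib_left mult.assoc)

lemma sandwich_scale_right: "sandwich u (X :: bool cmat) (\<lambda>k. c * w k) = c * sandwich u X w"
  by (simp add: sandwich_def sum_UNIV_bool algebra_simps)

lemma sandwich_hermitian_swap: "hermitian X \<Longrightarrow> sandwich w (X :: bool cmat) u = cnj (sandwich u X w)"
  by (elim hermitianE) (simp add: sandwich_def sum_UNIV_bool complex_cnj algebra_simps)

lemma cmod_sandwich_perp:
  "(cmod (sandwich v (pauli_mat x0 x) (perp v)))\<^sup>2 = sqnorm x * (ket_sqnorm v)\<^sup>2 - (dot x (bloch v))\<^sup>2"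
proof (rule qubit_coords[of v])
  fix a1 a2 c1 c2
  assume v: "v False = Complex a1 a2" "v True = Complex c1 c2"
    and n: "ket_sqnorm v = a1 * a1 + a2 * a2 + c1 * c1 + c2 * c2"
    and b: "bloch v = Vec3 (2 * (c1 * a1 + c2 * a2)) (2 * (c2 * a1 - c1 * a2))
                        (a1 * a1 + a2 * a2 - c1 * c1 - c2 * c2)"
  let ?s = "sandwich v (pauli_mat x0 x) (perp v)"
  have re_im: "Re ?s = vx x * (a1 * a1 + c2 * c2 - a2 * a2 - c1 * c1) + 2 * vz x * (a2 * c2 - a1 * c1)
                - 2 * vy x * (a1 * a2 + c1 * c2)"
    "Im ?s = vy x * (a2 * a2 + c2 * c2 - a1 * a1 - c1 * c1) + 2 * vz x * (a1 * c2 + a2 * c1)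
                + 2 * vx x * (c1 * c2 - a1 * a2)"
    by (simp_all add: sandwich_def sum_UNIV_bool perp_def v) (simp_all add: algebra_simps)
  show ?thesis
    unfolding cmod_power2 re_im n b sqnorm_def dot_def vec3.sel by algebra
qed

definition l1_coherence :: "(bool \<Rightarrow> bool cvec) \<Rightarrow> bool cmat \<Rightarrow> real" where
  "l1_coherence \<xi> X = (\<Sum>(i, j)\<in>{(i, j). i \<noteq> j}. cmod (sandwich (\<xi> i) X (\<xi> j)))"

lemma l1_coherence_bool:
  "l1_coherence \<xi> X = cmod (sandwich (\<xi> False) X (\<xi> True)) + cmod (sandwich (\<xi> True) X (\<xi> False))"
proof -
  have "{(i, j). (i::bool) \<noteq> j} = {(False, True), (True, False)}"
    by auto
  then show ?thesis
    by (simp add: l1_coherence_def)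
qed

lemma l1_coherence_pauli_mat:
  assumes "orthonormal_basis \<xi>"
  shows "l1_coherence \<xi> (pauli_mat x0 x) = 2 * sqrt (sqnorm (cross x (bloch (\<xi> False))))"
proof -
  obtain c where c: "cmod c = 1" "\<xi> True = (\<lambda>k. c * perp (\<xi> False) k)"
    using orthonormal_basisD(2)[OF assms] by blast
  have "cmod (sandwich (\<xi> False) (pauli_mat x0 x) (\<xi> True))
      = sqrt ((cmod (sandwich (\<xi> False) (pauli_mat x0 x) (perp (\<xi> False))))\<^sup>2)"
    by (simp add: c sandwich_scale_right norm_mult)
  also have "\<dots> = sqrt (sqnorm (cross x (bloch (\<xi> False))))"
    using orthonormal_basisD(1)[OF assms] sqnorm_minus_dot_square[OF sqnorm_bloch_basis[OF assms]]
    by (simp add: cmod_sandwich_perp)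
  finally show ?thesis
    unfolding l1_coherence_bool
    by (simp add: sandwich_hermitian_swap[OF hermitian_pauli_mat, of "\<xi> True"])
qed

lemma l1_coherence_le_trace:
  assumes "orthonormal_basis \<xi>" "psd X"
  shows "l1_coherence \<xi> X \<le> Re (trace X)"
proof -
  obtain x0 x where X: "X = pauli_mat x0 x"
    using hermitianE[OF psd_hermitian[OF assms(2)]] .
  have "sqrt (sqnorm (cross x (bloch (\<xi> False)))) \<le> sqrt (sqnorm x)"
    using sqnorm_cross_le[OF sqnorm_bloch_basis[OF assms(1)]] by simp
  then have "sqrt (sqnorm (cross x (bloch (\<xi> False)))) \<le> x0"
    using assms(2) X psd_pauli_mat_iff real_sqrt_le_mono order_trans by blast
  then show ?thesis
    using assms(1) X by (simp add: l1_coherence_pauli_mat)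
qed

lemma inner_scale_right: "inner u (\<lambda>k. c * w k) = c * inner u w"
  by (simp add: inner_def sum_distrib_left algebra_simps)

lemma mat_vec_scale_right: "mat_vec (X :: bool cmat) (\<lambda>l. c * w l) = (\<lambda>k. c * mat_vec X w k)"
  by (simp add: mat_vec_def sum_distrib_left algebra_simps)

lemma mat_vec_pauli_mat_bloch:
  "mat_vec (pauli_mat x0 (s *\<^sub>R bloch v)) v = (\<lambda>l. of_real (x0 + s * ket_sqnorm v) * v l)"
  "mat_vec (pauli_mat x0 (s *\<^sub>R bloch v)) (perp v) = (\<lambda>l. of_real (x0 - s * ket_sqnorm v) * perp v l)"
  by (rule qubit_coords[of v];
      simp add: mat_vec_def sum_UNIV_bool perp_def fun_eq_iff all_bool_eq complex_eq_iff algebra_simps)+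

lemma eigenbasis_pauli_mat_iff:
  assumes "orthonormal_basis \<xi>"
  shows "eigenbasis (pauli_mat x0 x) \<xi> \<longleftrightarrow> cross x (bloch (\<xi> False)) = 0"
proof
  have v: "ket_sqnorm (\<xi> False) = 1" and n: "sqnorm (bloch (\<xi> False)) = 1"
    using orthonormal_basisD(1) sqnorm_bloch_basis assms by blast+
  assume "eigenbasis (pauli_mat x0 x) \<xi>"
  then obtain c where "mat_vec (pauli_mat x0 x) (\<xi> False) = (\<lambda>l. c * \<xi> False l)"
    by (auto simp: eigenbasis_def)
  then have "sandwich (perp (\<xi> False)) (pauli_mat x0 x) (\<xi> False) = 0"
    by (simp add: sandwich_eq_inner inner_scale_right inner_perp)
  then have "sandwich (\<xi> False) (pauli_mat x0 x) (perp (\<xi> False)) = 0"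
    by (simp add: sandwich_hermitian_swap[OF hermitian_pauli_mat, of "\<xi> False"])
  then have "sqnorm x - (dot x (bloch (\<xi> False)))\<^sup>2 = 0"
    using cmod_sandwich_perp[of "\<xi> False" x0 x] v by simp
  then show "cross x (bloch (\<xi> False)) = 0"
    by (simp add: sqnorm_minus_dot_square[OF n])
next
  assume "cross x (bloch (\<xi> False)) = 0"
  then have x: "x = dot x (bloch (\<xi> False)) *\<^sub>R bloch (\<xi> False)" (is "x = ?s *\<^sub>R _")
    using cross_eq_0_imp_parallel sqnorm_bloch_basis[OF assms] by blast
  obtain c where c: "\<xi> True = (\<lambda>k. c * perp (\<xi> False) k)"
    using orthonormal_basisD(2)[OF assms] by blast
  have "mat_vec (pauli_mat x0 x) (\<xi> False) = (\<lambda>l. of_real (x0 + ?s) * \<xi> False l)"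
    "mat_vec (pauli_mat x0 x) (\<xi> True) = (\<lambda>l. of_real (x0 - ?s) * \<xi> True l)"
    using orthonormal_basisD(1)[OF assms]
    by (subst x; simp add: c mat_vec_scale_right mat_vec_pauli_mat_bloch algebra_simps)+
  then show "eigenbasis (pauli_mat x0 x) \<xi>"
    unfolding eigenbasis_def all_bool_eq using assms by blast
qed

lemma ex_eigenbasis:
  assumes "hermitian X"
  shows "\<exists>\<xi>. eigenbasis X \<xi>"
proof -
  obtain x0 x where X: "X = pauli_mat x0 x"
    using hermitianE[OF assms] .
  obtain m where "sqnorm m = 1" "cross x m = 0"
    using ex_unit_cross_eq_0 by blast
  then show ?thesis
    using ex_orthonormal_basis_bloch eigenbasis_pauli_mat_iff X by metis
qed

definition spectral :: "(bool \<Rightarrow> real) \<Rightarrow> (bool \<Rightarrow> bool cvec) \<Rightarrow> bool cmat" where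
  "spectral p e = (\<lambda>i j. \<Sum>k\<in>UNIV. of_real (p k) * e k i * cnj (e k j))"

definition proj :: "bool cvec \<Rightarrow> bool cmat" where
  "proj w = (\<lambda>i j. w i * cnj (w j))"

lemma proj_eq_pauli_mat: "proj w = pauli_mat (ket_sqnorm w / 2) ((1 / 2) *\<^sub>R bloch w)"
  by (rule qubit_coords[of w])
    (simp add: proj_def fun_eq_iff all_bool_eq complex_eq_iff field_simps)

lemma psd_proj: "psd (proj w)"
  by (simp add: proj_eq_pauli_mat psd_pauli_mat_iff sqnorm_bloch real_sqrt_mult)

lemma sandwich_proj: "sandwich a (proj w) b = inner a w * inner w b"
  by (simp add: proj_def sandwich_def inner_bool sum_UNIV_bool algebra_simps)

lemma spectral_eq_proj: "spectral p e = (\<lambda>i j. of_real (p False) * proj (e False) i j + of_real (p True) * proj (e True) i j)"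
  by (simp add: spectral_def proj_def sum_UNIV_bool fun_eq_iff algebra_simps)

lemma proj_scale:
  assumes "cmod c = 1"
  shows "proj (\<lambda>k. c * w k) = proj w"
proof -
  have "c * cnj c = 1"
    using assms complex_norm_square[of c] by simp
  then show ?thesis
    unfolding proj_def complex_cnj_mult by (intro ext) algebra
qed

lemma pauli_mat_spectral:
  assumes "orthonormal_basis e"
  shows "pauli_mat x0 (s *\<^sub>R bloch (e False)) = spectral (\<lambda>k. if k then x0 - s else x0 + s) e"
proof -
  obtain c where "cmod c = 1" "e True = (\<lambda>k. c * perp (e False) k)"
    using orthonormal_basisD(2)[OF assms] by blast
  then have "spectral (\<lambda>k. if k then x0 - s else x0 + s) e
      = (\<lambda>i j. of_real (x0 + s) * proj (e False) i j + of_real (x0 - s) * proj (perp (e False)) i j)"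
    by (simp add: spectral_eq_proj proj_scale)
  also have "\<dots> = pauli_mat x0 (s *\<^sub>R bloch (e False))"
    unfolding proj_eq_pauli_mat pauli_mat_lincomb using orthonormal_basisD(1)[OF assms]
    by (simp add: algebra_simps) (simp add: scaleR_add_left[symmetric] scaleR_diff_left[symmetric] field_simps)
  finally show ?thesis ..
qed

lemma sandwich_lincomb:
  "sandwich u (\<lambda>i j. a * A i j + b * B i j) w = a * sandwich u A w + b * sandwich u B w"
  by (simp add: sandwich_def sum.distrib sum_distrib_left algebra_simps)

lemma sandwich_scale: "sandwich u (\<lambda>i j. c * A i j) w = c * sandwich u A w"
  by (simp add: sandwich_def sum_distrib_left algebra_simps)

lemma sandwich_spectral_offdiag:
  assumes "orthonormal_basis e" "i \<noteq> j"
  shows "sandwich (e i) (spectral p e) (e j) = 0"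
proof -
  have "inner (e k) (e l) = (if k = l then 1 else 0)" for k l
    using assms(1) by (simp add: orthonormal_basis_def)
  then show ?thesis
    using assms(2) by (simp add: spectral_eq_proj sandwich_lincomb sandwich_proj)
qed

lemma spectral_scale: "(\<lambda>i j. of_real c * spectral p e i j) = spectral (\<lambda>k. c * p k) e"
  by (simp add: spectral_def fun_eq_iff sum_distrib_left algebra_simps)

lemma mat_vec_spectral:
  "mat_vec (spectral p e) v = (\<lambda>i. \<Sum>k\<in>UNIV. of_real (p k) * inner (e k) v * e k i)"
  by (simp add: spectral_def mat_vec_def inner_bool sum_UNIV_bool fun_eq_iff algebra_simps)

lemma eigenbasis_spectral:
  assumes "orthonormal_basis e"
  shows "eigenbasis (spectral p e) e"
proof -
  have "inner (e k) (e l) = (if k = l then 1 else 0)" for k l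
    using assms by (simp add: orthonormal_basis_def)
  then have "mat_vec (spectral p e) (e l) = (\<lambda>i. of_real (p l) * e l i)" for l
    by (cases l) (simp_all add: mat_vec_spectral sum_UNIV_bool)
  then show ?thesis
    using assms by (auto simp: eigenbasis_def)
qed

lemma l1_coherence_spectral: "orthonormal_basis e \<Longrightarrow> l1_coherence e (spectral p e) = 0"
  by (simp add: l1_coherence_bool sandwich_spectral_offdiag)

lemma steered_apply: "steered M \<rho> i j = (\<Sum>a\<in>UNIV. \<Sum>c\<in>UNIV. M a c * \<rho> (c, i) (a, j))"
  by (simp add: steered_def ptrA_def tensor_id_mult_def)

lemma trace_ptrA: "trace (ptrA (\<rho> :: ('a::finite \<times> 'b::finite) cmat)) = trace \<rho>"
  unfolding trace_def ptrA_def by (simp add: sum_UNIV_prod) (rule sum.swap)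

lemma steered_idm: "steered idm \<rho> = ptrA \<rho>"
  by (simp add: fun_eq_iff steered_apply ptrA_def idm_def sum_UNIV_bool)

lemma prob_M_eq: "prob_M M \<rho> = Re (trace (steered M \<rho>))"
  by (simp add: prob_M_def trace_def steered_apply tensor_id_mult_def sum_UNIV_prod sum_UNIV_bool)

text \<open>The operator \<open>\<langle>v|\<^sub>B \<rho> |v\<rangle>\<^sub>B\<close> on \<open>A\<close>, in transposed index order so that
  \<open>\<langle>v| tr\<^sub>A((M \<otimes> \<one>) \<rho>) |v\<rangle>\<close> is the trace of its product with \<open>M\<close>.\<close>
definition partial_sandwich :: "bool cvec \<Rightarrow> (bool \<times> bool) cmat \<Rightarrow> bool cmat" where
  "partial_sandwich v \<rho> = (\<lambda>c a. \<Sum>i\<in>UNIV. \<Sum>j\<in>UNIV. cnj (v i) * \<rho> (c, i) (a, j) * v j)"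

lemma qform_steered:
  "qform_on UNIV (steered M \<rho>) v = (\<Sum>a\<in>UNIV. \<Sum>c\<in>UNIV. M a c * partial_sandwich v \<rho> c a)"
  unfolding qform_on_def steered_apply partial_sandwich_def
  by (simp add: sum_UNIV_bool) (simp add: algebra_simps)

lemma psd_partial_sandwich:
  assumes "psd \<rho>"
  shows "psd (partial_sandwich v \<rho>)"
proof -
  have "qform_on UNIV (partial_sandwich v \<rho>) w = qform_on UNIV \<rho> (\<lambda>p. w (fst p) * v (snd p))" for w
    unfolding qform_on_def partial_sandwich_def
    by (simp add: sum_UNIV_bool sum_UNIV_prod) (simp add: algebra_simps)
  then show ?thesis
    using assms by (simp add: psd_on_def)
qed

lemma trace_product_psd:
  fixes M R :: "bool cmat"
  assumes "psd M" "psd R"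
  shows "Im (\<Sum>a\<in>UNIV. \<Sum>c\<in>UNIV. M a c * R c a) = 0 \<and> 0 \<le> Re (\<Sum>a\<in>UNIV. \<Sum>c\<in>UNIV. M a c * R c a)"
proof -
  obtain m0 m r0 r where M: "M = pauli_mat m0 m" and R: "R = pauli_mat r0 r"
    using hermitianE[OF psd_hermitian[OF assms(1)]] hermitianE[OF psd_hermitian[OF assms(2)]]
    by metis
  have m: "sqrt (sqnorm m) \<le> m0" and r: "sqrt (sqnorm r) \<le> r0"
    using assms M R psd_pauli_mat_iff by blast+
  have "\<bar>dot m r\<bar> \<le> sqrt (sqnorm m) * sqrt (sqnorm r)"
    by (rule abs_dot_le)
  also have "\<dots> \<le> m0 * r0"
    using m r by (simp add: mult_mono order_trans[OF real_sqrt_ge_zero m])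
  finally have "0 \<le> m0 * r0 + dot m r"
    by linarith
  moreover have "(\<Sum>a\<in>UNIV. \<Sum>c\<in>UNIV. M a c * R c a) = of_real (2 * (m0 * r0 + dot m r))"
    unfolding M R by (simp add: sum_UNIV_bool dot_def complex_eq_iff algebra_simps)
  ultimately show ?thesis
    by simp
qed

lemma psd_steered:
  assumes "psd M" "psd \<rho>"
  shows "psd (steered M \<rho>)"
  unfolding psd_on_def qform_steered
  using trace_product_psd[OF assms(1) psd_partial_sandwich[OF assms(2)]] by blast

lemma psd_idm: "psd (idm :: bool cmat)"
  by (simp add: idm_eq_pauli_mat psd_pauli_mat_iff)

lemma povm_elem_idm: "povm_elem (idm :: bool cmat)"
proof -
  have "(\<lambda>i j. idm i j - idm i j) = pauli_mat 0 0"
    by (simp add: fun_eq_iff all_bool_eq complex_eq_iff)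
  then show ?thesis
    by (simp add: povm_elem_def psd_idm psd_pauli_mat_iff)
qed

lemma psd_ptrA: "psd \<rho> \<Longrightarrow> psd (ptrA (\<rho> :: (bool \<times> bool) cmat))"
  using psd_steered[OF psd_idm] by (simp add: steered_idm)

definition steering_elems :: "(bool \<times> bool) cmat \<Rightarrow> bool cmat set" where
  "steering_elems \<rho> = {M. povm_elem M \<and> prob_M M \<rho> > 0}"

definition eigenbases :: "(bool \<times> bool) cmat \<Rightarrow> (bool \<Rightarrow> bool cvec) set" where
  "eigenbases \<rho> = {\<xi>. eigenbasis (ptrA \<rho>) \<xi>}"

definition steered_l1 :: "(bool \<times> bool) cmat \<Rightarrow> (bool \<Rightarrow> bool cvec) \<Rightarrow> bool cmat \<Rightarrow> real" where
  "steered_l1 \<rho> \<xi> M = (1 / prob_M M \<rho>) * l1_coherence \<xi> (steered M \<rho>)"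

definition max_steered_l1 :: "(bool \<times> bool) cmat \<Rightarrow> (bool \<Rightarrow> bool cvec) \<Rightarrow> real" where
  "max_steered_l1 \<rho> \<xi> = (SUP M\<in>steering_elems \<rho>. steered_l1 \<rho> \<xi> M)"

lemma steered_coherence_eq: "steered_coherence \<rho> = (INF \<xi>\<in>eigenbases \<rho>. max_steered_l1 \<rho> \<xi>)"
  unfolding steered_coherence_def max_steered_l1_def steered_l1_def l1_coherence_def
    steering_elems_def eigenbases_def ..

definition positive_steering :: "(bool \<times> bool) cmat \<Rightarrow> bool" where
  "positive_steering \<rho> \<longleftrightarrow> (\<forall>M. povm_elem M \<longrightarrow> psd (steered M \<rho>))"

lemma positive_steering_psd: "psd \<rho> \<Longrightarrow> positive_steering \<rho>"
  by (simp add: positive_steering_def povm_elem_def psd_steered)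

lemma idm_steering_elem: "density \<rho> \<Longrightarrow> idm \<in> steering_elems \<rho>"
  by (simp add: steering_elems_def povm_elem_idm prob_M_eq steered_idm trace_ptrA density_def)

lemma eigenbases_nonempty: "psd (ptrA \<rho>) \<Longrightarrow> eigenbases \<rho> \<noteq> {}"
  using ex_eigenbasis[OF psd_hermitian] by (simp add: eigenbases_def)

lemma orthonormal_basis_eigenbases: "\<xi> \<in> eigenbases \<rho> \<Longrightarrow> orthonormal_basis \<xi>"
  by (simp add: eigenbases_def eigenbasis_def)

lemma steered_l1_bounds:
  assumes "positive_steering \<rho>" "orthonormal_basis \<xi>" "M \<in> steering_elems \<rho>"
  shows "0 \<le> steered_l1 \<rho> \<xi> M" "steered_l1 \<rho> \<xi> M \<le> 1"
proof -
  have p: "prob_M M \<rho> > 0" and "povm_elem M"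
    using assms(3) by (auto simp: steering_elems_def)
  then have "psd (steered M \<rho>)"
    using assms(1) by (simp add: positive_steering_def)
  then have "l1_coherence \<xi> (steered M \<rho>) \<le> prob_M M \<rho>"
    unfolding prob_M_eq by (rule l1_coherence_le_trace[OF assms(2)])
  then show "steered_l1 \<rho> \<xi> M \<le> 1"
    using p by (simp add: steered_l1_def)
  show "0 \<le> steered_l1 \<rho> \<xi> M"
    using p by (simp add: steered_l1_def l1_coherence_def sum_nonneg case_prod_beta)
qed

lemma bdd_above_steered_l1:
  assumes "positive_steering \<rho>" "orthonormal_basis \<xi>"
  shows "bdd_above (steered_l1 \<rho> \<xi> ` steering_elems \<rho>)"
  using steered_l1_bounds(2)[OF assms] by (rule bdd_aboveI2)

lemma max_steered_l1_nonneg: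
  assumes "positive_steering \<rho>" "orthonormal_basis \<xi>" "steering_elems \<rho> \<noteq> {}"
  shows "0 \<le> max_steered_l1 \<rho> \<xi>"
proof -
  obtain M where M: "M \<in> steering_elems \<rho>"
    using assms(3) by blast
  then show ?thesis
    unfolding max_steered_l1_def
    using steered_l1_bounds(1)[OF assms(1,2) M] bdd_above_steered_l1[OF assms(1,2)]
    by (simp add: cSUP_upper2)
qed

lemma steered_coherence_le:
  assumes "positive_steering \<rho>" "steering_elems \<rho> \<noteq> {}" "\<xi> \<in> eigenbases \<rho>"
  shows "steered_coherence \<rho> \<le> max_steered_l1 \<rho> \<xi>"
proof -
  have "bdd_below (max_steered_l1 \<rho> ` eigenbases \<rho>)"
    using max_steered_l1_nonneg[OF assms(1) orthonormal_basis_eigenbases assms(2)]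
    by (rule bdd_belowI2)
  then show ?thesis
    unfolding steered_coherence_eq using assms(3) by (rule cINF_lower)
qed

lemma steered_coherence_mono:
  assumes "positive_steering \<rho>" "positive_steering \<sigma>"
    and elems: "steering_elems \<sigma> = steering_elems \<rho>" "steering_elems \<rho> \<noteq> {}"
    and "eigenbases \<rho> \<noteq> {}"
    and better: "\<And>\<xi>. \<xi> \<in> eigenbases \<rho> \<Longrightarrow>
      \<exists>\<eta>\<in>eigenbases \<sigma>. \<forall>M\<in>steering_elems \<rho>. steered_l1 \<sigma> \<eta> M \<le> steered_l1 \<rho> \<xi> M"
  shows "steered_coherence \<sigma> \<le> steered_coherence \<rho>"
  unfolding steered_coherence_eq[of \<rho>]
proof (rule cINF_greatest[OF assms(5)])
  fix \<xi> assume \<xi>: "\<xi> \<in> eigenbases \<rho>"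
  then obtain \<eta> where \<eta>: "\<eta> \<in> eigenbases \<sigma>"
    and le: "\<forall>M\<in>steering_elems \<rho>. steered_l1 \<sigma> \<eta> M \<le> steered_l1 \<rho> \<xi> M"
    using better by blast
  have "steered_coherence \<sigma> \<le> max_steered_l1 \<sigma> \<eta>"
    using steered_coherence_le[OF assms(2) _ \<eta>] elems by simp
  also have "\<dots> \<le> max_steered_l1 \<rho> \<xi>"
    unfolding max_steered_l1_def elems(1)
    using le elems(2) bdd_above_steered_l1[OF assms(1) orthonormal_basis_eigenbases[OF \<xi>]]
    by (intro cSUP_mono) auto
  finally show "steered_coherence \<sigma> \<le> max_steered_l1 \<rho> \<xi>" .
qed

text \<open>The state \<open>(|0\<rangle>\<langle>0| \<otimes> |v\<rangle>\<langle>v| + |1\<rangle>\<langle>1| \<otimes> |v\<^sup>\<bottom>\<rangle>\<langle>v\<^sup>\<bottom>|) / 2\<close>: every steered state of Bob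
  is diagonal in the basis \<open>v, v\<^sup>\<bottom>\<close>, which is also an eigenbasis of his maximally mixed marginal.\<close>
definition cq_state :: "bool cvec \<Rightarrow> (bool \<times> bool) cmat" where
  "cq_state v = (\<lambda>(a, i) (b, j). if a = b then of_real (1 / 2) * proj (basis_of v a) i j else 0)"

lemma steered_cq_state:
  "steered M (cq_state v)
     = (\<lambda>i j. M False False * (of_real (1 / 2) * proj v i j) + M True True * (of_real (1 / 2) * proj (perp v) i j))"
  by (simp add: fun_eq_iff steered_apply cq_state_def basis_of_def sum_UNIV_bool)

lemma ptrA_cq_state: "ket_sqnorm v = 1 \<Longrightarrow> ptrA (cq_state v) = pauli_mat (1 / 2) 0"
  unfolding steered_idm[symmetric] steered_cq_state
  by (simp add: idm_def proj_eq_pauli_mat pauli_mat_scale pauli_mat_lincomb[of "1 / 2" _ _ "1 / 2", simplified])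

lemma density_cq_state:
  assumes "ket_sqnorm v = 1"
  shows "density (cq_state v)"
proof -
  have "qform_on UNIV (cq_state v) u
      = of_real (1 / 2) * qform_on UNIV (proj v) (\<lambda>i. u (False, i))
        + of_real (1 / 2) * qform_on UNIV (proj (perp v)) (\<lambda>i. u (True, i))" for u
    by (simp add: qform_on_def sum_UNIV_prod sum_UNIV_bool cq_state_def basis_of_def algebra_simps)
  then have "psd (cq_state v)"
    using psd_proj[of v] psd_proj[of "perp v"] by (simp add: psd_on_def)
  moreover have "trace (cq_state v) = 1"
    using assms by (simp add: trace_ptrA[symmetric] ptrA_cq_state)
  ultimately show ?thesis
    by (simp add: density_def)
qed

lemma steered_coherence_cq_state:
  assumes "ket_sqnorm v = 1"
  shows "steered_coherence (cq_state v) \<le> 0"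
proof -
  have \<rho>: "positive_steering (cq_state v)" "steering_elems (cq_state v) \<noteq> {}"
    using density_cq_state[OF assms] idm_steering_elem
    by (auto simp: density_def positive_steering_psd)
  have "basis_of v \<in> eigenbases (cq_state v)"
    using orthonormal_basis_of[OF assms]
    by (simp add: eigenbases_def ptrA_cq_state[OF assms] eigenbasis_pauli_mat_iff)
  then have "steered_coherence (cq_state v) \<le> max_steered_l1 (cq_state v) (basis_of v)"
    by (rule steered_coherence_le[OF \<rho>])
  also have "\<dots> = 0"
  proof -
    have "l1_coherence (basis_of v) (steered M (cq_state v)) = 0" for M
      unfolding l1_coherence_bool steered_cq_state sandwich_lincomb sandwich_scale
      by (simp add: basis_of_def sandwich_proj inner_perp)
    then show ?thesis
      using \<rho>(2) by (simp add: max_steered_l1_def steered_l1_def)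
  qed
  finally show ?thesis .
qed

definition ket0_proj :: "bool cmat" where
  "ket0_proj = proj (ket 1 0)"

lemma povm_elem_ket0_proj: "povm_elem ket0_proj"
proof -
  have "(\<lambda>i j. idm i j - ket0_proj i j) = proj (ket 0 1)"
    by (simp add: ket0_proj_def proj_def ket_def idm_def fun_eq_iff all_bool_eq)
  then show ?thesis
    by (simp add: povm_elem_def ket0_proj_def psd_proj)
qed

lemma steered_ket0_proj_cq_state:
  "steered ket0_proj (cq_state v) = pauli_mat (ket_sqnorm v / 4) ((1 / 4) *\<^sub>R bloch v)"
proof -
  have "steered ket0_proj (cq_state v) = (\<lambda>i j. of_real (1 / 2) * proj v i j)"
    by (simp add: steered_cq_state ket0_proj_def proj_def ket_def)
  also have "\<dots> = pauli_mat (ket_sqnorm v / 4) ((1 / 4) *\<^sub>R bloch v)"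
    by (simp only: proj_eq_pauli_mat pauli_mat_scale) simp
  finally show ?thesis .
qed

lemma psd_on_unit_ancilla:
  fixes Y :: "(nat \<times> bool) cmat"
  shows "psd_on ({..<1} \<times> UNIV) Y \<longleftrightarrow> psd (\<lambda>i j. Y (0, i) (0, j))"
proof -
  have pairs: "{..<1::nat} \<times> (UNIV :: bool set) = {(0, False), (0, True)}"
    by auto
  have "qform_on ({..<1} \<times> UNIV) Y u = qform_on UNIV (\<lambda>i j. Y (0, i) (0, j)) (\<lambda>k. u (0, k))" for u
    unfolding qform_on_def pairs by (simp add: sum_UNIV_bool)
  then have "psd_on ({..<1} \<times> UNIV) Y \<longleftrightarrow>
    (\<forall>u :: (nat \<times> bool) cvec. Im (qform_on UNIV (\<lambda>i j. Y (0, i) (0, j)) (\<lambda>k. u (0, k))) = 0 \<and>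
         0 \<le> Re (qform_on UNIV (\<lambda>i j. Y (0, i) (0, j)) (\<lambda>k. u (0, k))))"
    by (simp add: psd_on_def)
  also have "\<dots> \<longleftrightarrow> psd (\<lambda>i j. Y (0, i) (0, j))"
    unfolding psd_on_def
  proof (intro iffI allI)
    fix v :: "bool cvec"
    assume "\<forall>u :: (nat \<times> bool) cvec. Im (qform_on UNIV (\<lambda>i j. Y (0, i) (0, j)) (\<lambda>k. u (0, k))) = 0 \<and>
         0 \<le> Re (qform_on UNIV (\<lambda>i j. Y (0, i) (0, j)) (\<lambda>k. u (0, k)))"
    from this[rule_format, of "\<lambda>p. v (snd p)"]
    show "Im (qform_on UNIV (\<lambda>i j. Y (0, i) (0, j)) v) = 0 \<and> 0 \<le> Re (qform_on UNIV (\<lambda>i j. Y (0, i) (0, j)) v)"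
      by simp
  qed simp
  finally show ?thesis .
qed

locale channel =
  fixes \<Lambda> :: "bool cmat \<Rightarrow> bool cmat"
  assumes qubit_channel: "qubit_channel \<Lambda>"
begin

lemma map_lincomb: "\<Lambda> (\<lambda>i j. a * X i j + b * Y i j) = (\<lambda>i j. a * \<Lambda> X i j + b * \<Lambda> Y i j)"
  using qubit_channel by (simp add: qubit_channel_def linear_map_def)

lemma map_scale: "\<Lambda> (\<lambda>i j. a * X i j) = (\<lambda>i j. a * \<Lambda> X i j)"
  using map_lincomb[of a X 0 X] by simp

lemma map_sum: "finite S \<Longrightarrow> \<Lambda> (\<lambda>i j. \<Sum>k\<in>S. f k i j) = (\<lambda>i j. \<Sum>k\<in>S. \<Lambda> (f k) i j)"
proof (induction S rule: finite_induct)
  case empty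
  then show ?case
    using map_scale[of 0 "\<lambda>i j. 0"] by simp
next
  case (insert k S)
  then show ?case
    using map_lincomb[of 1 "f k" 1 "\<lambda>i j. \<Sum>k\<in>S. f k i j"] by simp
qed

lemma trace_preserving: "trace (\<Lambda> X) = trace X"
  using qubit_channel by (simp add: qubit_channel_def trace_preserving_def)

text \<open>Positivity is complete positivity with a one-dimensional ancilla.\<close>
lemma psd_preserving:
  assumes "psd X"
  shows "psd (\<Lambda> X)"
proof -
  define Y :: "(nat \<times> bool) cmat" where "Y = (\<lambda>p q. X (snd p) (snd q))"
  have "psd_on ({..<1} \<times> UNIV) Y"
    using assms psd_on_unit_ancilla[of Y] by (simp add: Y_def)
  then have "psd_on ({..<1} \<times> UNIV) (id_tensor \<Lambda> Y)"
    using qubit_channel by (simp add: qubit_channel_def completely_positive_def)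
  then show ?thesis
    using psd_on_unit_ancilla[of "id_tensor \<Lambda> Y"] by (simp add: id_tensor_def Y_def)
qed

lemma hermitian_preserving:
  assumes "hermitian X"
  shows "hermitian (\<Lambda> X)"
proof -
  obtain x0 x where X: "X = pauli_mat x0 x"
    using hermitianE[OF assms] .
  define r where "r = \<bar>x0\<bar> + sqrt (sqnorm x)"
  have "X = (\<lambda>i j. of_real 1 * pauli_mat r x i j + of_real (-1) * pauli_mat (r - x0) 0 i j)"
    by (simp only: X pauli_mat_lincomb) simp
  moreover have "psd (pauli_mat r x)" "psd (pauli_mat (r - x0) 0)"
  proof -
    have "x0 \<le> r"
      unfolding r_def using abs_ge_self[of x0] real_sqrt_ge_zero[OF sqnorm_nonneg, of x] by linarith
    moreover have "sqrt (sqnorm x) \<le> r"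
      by (simp add: r_def)
    ultimately show "psd (pauli_mat r x)" "psd (pauli_mat (r - x0) 0)"
      by (simp_all add: psd_pauli_mat_iff)
  qed
  ultimately have "\<Lambda> X = (\<lambda>i j. of_real 1 * \<Lambda> (pauli_mat r x) i j + of_real (-1) * \<Lambda> (pauli_mat (r - x0) 0) i j)"
    by (simp only: map_lincomb)
  moreover have "hermitian (\<Lambda> (pauli_mat r x))" "hermitian (\<Lambda> (pauli_mat (r - x0) 0))"
    using \<open>psd (pauli_mat r x)\<close> \<open>psd (pauli_mat (r - x0) 0)\<close> psd_preserving psd_hermitian by blast+
  ultimately show ?thesis
    by (simp only: hermitian_lincomb)
qed

definition bloch_map :: "vec3 \<Rightarrow> vec3" where
  "bloch_map x = pauli_vec (\<Lambda> (pauli_mat 0 x))"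

definition bloch_shift :: vec3 where
  "bloch_shift = pauli_vec (\<Lambda> idm)"

lemma apply_hermitian: "hermitian X \<Longrightarrow> \<Lambda> X = pauli_mat (pauli_scalar X) (pauli_vec (\<Lambda> X))"
  using hermitian_eq_pauli_mat[OF hermitian_preserving] by (simp add: pauli_scalar_def trace_preserving)

lemma apply_idm: "\<Lambda> idm = pauli_mat 1 bloch_shift"
  using apply_hermitian[of idm] by (simp add: idm_eq_pauli_mat hermitian_pauli_mat bloch_shift_def)

lemma apply_pauli_mat0: "\<Lambda> (pauli_mat 0 x) = pauli_mat 0 (bloch_map x)"
  using apply_hermitian[of "pauli_mat 0 x"] by (simp add: hermitian_pauli_mat bloch_map_def)

lemma apply_pauli_mat: "\<Lambda> (pauli_mat x0 x) = pauli_mat x0 (x0 *\<^sub>R bloch_shift + bloch_map x)"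
proof -
  have "pauli_mat x0 x = (\<lambda>i j. of_real x0 * idm i j + of_real 1 * pauli_mat 0 x i j)"
    by (simp only: idm_eq_pauli_mat pauli_mat_lincomb) simp
  then have "\<Lambda> (pauli_mat x0 x) = (\<lambda>i j. of_real x0 * \<Lambda> idm i j + of_real 1 * \<Lambda> (pauli_mat 0 x) i j)"
    by (simp only: map_lincomb[symmetric])
  also have "\<dots> = pauli_mat x0 (x0 *\<^sub>R bloch_shift + bloch_map x)"
    by (simp only: apply_idm apply_pauli_mat0 pauli_mat_lincomb) simp
  finally show ?thesis .
qed

lemma linear_bloch_map: "linear bloch_map"
proof -
  have "bloch_map (a *\<^sub>R x + b *\<^sub>R y) = a *\<^sub>R bloch_map x + b *\<^sub>R bloch_map y" for a b x y
  proof -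
    have "pauli_mat 0 (bloch_map (a *\<^sub>R x + b *\<^sub>R y))
        = \<Lambda> (\<lambda>i j. of_real a * pauli_mat 0 x i j + of_real b * pauli_mat 0 y i j)"
      by (simp only: apply_pauli_mat0[symmetric] pauli_mat_lincomb) simp
    also have "\<dots> = pauli_mat 0 (a *\<^sub>R bloch_map x + b *\<^sub>R bloch_map y)"
      by (subst map_lincomb) (simp only: apply_pauli_mat0 pauli_mat_lincomb, simp)
    finally show ?thesis
      by (metis pauli_vec_pauli_mat)
  qed
  from this[of 1 _ 1] this[of _ _ 0] show ?thesis
    by (intro linearI) simp_all
qed

lemma unital_iff_bloch_shift: "unital \<Lambda> \<longleftrightarrow> bloch_shift = 0"
  using apply_pauli_mat[of 1 0] linear_0[OF linear_bloch_map]
  by (auto simp: unital_def idm_eq_pauli_mat dest: arg_cong[where f = pauli_vec])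

lemma sqnorm_bloch_map_le:
  assumes "unital \<Lambda>"
  shows "sqnorm (bloch_map y) \<le> sqnorm y"
proof -
  have "psd (\<Lambda> (pauli_mat (sqrt (sqnorm y)) y))"
    by (simp add: psd_preserving psd_pauli_mat_iff)
  then have "sqrt (sqnorm (bloch_map y)) \<le> sqrt (sqnorm y)"
    using assms by (simp add: apply_pauli_mat unital_iff_bloch_shift psd_pauli_mat_iff)
  then show ?thesis
    by simp
qed

lemma steered_id_tensor: "steered M (id_tensor \<Lambda> \<rho>) = \<Lambda> (steered M \<rho>)"
proof -
  have "\<Lambda> (steered M \<rho>) = (\<lambda>i j. \<Sum>a\<in>UNIV. \<Sum>c\<in>UNIV. \<Lambda> (\<lambda>i j. M a c * \<rho> (c, i) (a, j)) i j)"
    by (simp add: steered_apply[abs_def] map_sum)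
  also have "\<dots> = steered M (id_tensor \<Lambda> \<rho>)"
    by (simp add: steered_apply[abs_def] map_scale id_tensor_def)
  finally show ?thesis ..
qed

lemma ptrA_id_tensor: "ptrA (id_tensor \<Lambda> \<rho>) = \<Lambda> (ptrA (\<rho> :: (bool \<times> bool) cmat))"
  by (simp add: ptrA_def[abs_def] map_sum id_tensor_def)

lemma prob_M_id_tensor: "prob_M M (id_tensor \<Lambda> \<rho>) = prob_M M \<rho>"
  by (simp add: prob_M_eq steered_id_tensor trace_preserving)

lemma steering_elems_id_tensor: "steering_elems (id_tensor \<Lambda> \<rho>) = steering_elems \<rho>"
  by (simp add: steering_elems_def prob_M_id_tensor)

lemma positive_steering_id_tensor: "psd \<rho> \<Longrightarrow> positive_steering (id_tensor \<Lambda> \<rho>)"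
  using positive_steering_psd[of \<rho>]
  by (simp add: positive_steering_def steered_id_tensor psd_preserving)

lemma steered_l1_id_tensor:
  "steered_l1 (id_tensor \<Lambda> \<rho>) \<eta> M = (1 / prob_M M \<rho>) * l1_coherence \<eta> (\<Lambda> (steered M \<rho>))"
  by (simp add: steered_l1_def prob_M_id_tensor steered_id_tensor)

lemma steered_coherence_id_tensor_le:
  assumes "density \<rho>"
    and "\<And>\<xi>. \<xi> \<in> eigenbases \<rho> \<Longrightarrow> \<exists>\<eta>\<in>eigenbases (id_tensor \<Lambda> \<rho>).
           \<forall>M\<in>steering_elems \<rho>. steered_l1 (id_tensor \<Lambda> \<rho>) \<eta> M \<le> steered_l1 \<rho> \<xi> M"
  shows "steered_coherence (id_tensor \<Lambda> \<rho>) \<le> steered_coherence \<rho>"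
  using assms(1) idm_steering_elem[OF assms(1)]
  by (intro steered_coherence_mono assms(2))
    (auto simp: density_def positive_steering_psd positive_steering_id_tensor
      steering_elems_id_tensor eigenbases_nonempty psd_ptrA)

lemma eigenbasis_id_tensor_unital:
  assumes "unital \<Lambda>" "density \<rho>" "\<xi> \<in> eigenbases \<rho>" "orthonormal_basis \<eta>"
    and axis: "cross (bloch_map (bloch (\<xi> False))) (bloch (\<eta> False)) = 0"
  shows "\<eta> \<in> eigenbases (id_tensor \<Lambda> \<rho>)"
proof -
  define n where "n = bloch (\<xi> False)"
  have onb: "orthonormal_basis \<xi>" and n: "sqnorm n = 1"
    using orthonormal_basis_eigenbases[OF assms(3)] sqnorm_bloch_basis by (auto simp: n_def)
  obtain r0 r where r: "ptrA \<rho> = pauli_mat r0 r"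
    using hermitianE[OF psd_hermitian[OF psd_ptrA]] assms(2) by (metis density_def)
  then have "cross r n = 0"
    using assms(3) onb by (simp add: eigenbases_def eigenbasis_pauli_mat_iff n_def)
  then have "bloch_map r = bloch_map (dot r n *\<^sub>R n)"
    using cross_eq_0_imp_parallel[OF n] by metis
  then have "cross (bloch_map r) (bloch (\<eta> False)) = 0"
    using axis by (simp add: linear_scale[OF linear_bloch_map] n_def)
  then show ?thesis
    using assms(1,4)
    by (simp add: eigenbases_def ptrA_id_tensor r apply_pauli_mat unital_iff_bloch_shift
        eigenbasis_pauli_mat_iff)
qed

lemma steered_l1_id_tensor_le_unital:
  assumes "unital \<Lambda>" "positive_steering \<rho>" "orthonormal_basis \<xi>" "orthonormal_basis \<eta>"
    and axis: "cross (bloch_map (bloch (\<xi> False))) (bloch (\<eta> False)) = 0"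
    and M: "M \<in> steering_elems \<rho>"
  shows "steered_l1 (id_tensor \<Lambda> \<rho>) \<eta> M \<le> steered_l1 \<rho> \<xi> M"
proof -
  have p: "prob_M M \<rho> > 0" and "psd (steered M \<rho>)"
    using M assms(2) by (auto simp: steering_elems_def positive_steering_def)
  then obtain x0 x where x: "steered M \<rho> = pauli_mat x0 x"
    using hermitianE[OF psd_hermitian] by blast
  have "sqnorm (cross (bloch_map x) (bloch (\<eta> False))) \<le> sqnorm (cross x (bloch (\<xi> False)))"
    using sqnorm_cross_contraction[OF linear_bloch_map sqnorm_bloch_map_le[OF assms(1)]
        sqnorm_bloch_basis[OF assms(3)] sqnorm_bloch_basis[OF assms(4)] axis] .
  then show ?thesis
    unfolding steered_l1_id_tensor using p assms(1,3,4)
    by (simp add: steered_l1_def x apply_pauli_mat unital_iff_bloch_shift l1_coherence_pauli_mat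
        divide_right_mono)
qed

text \<open>For a unital channel the Bloch map is a contraction, so rotating the eigenbasis axis along
  with it can only shrink the transverse part of every steered Bloch vector.\<close>
lemma steered_coherence_id_tensor_le_unital:
  assumes "unital \<Lambda>" "density \<rho>"
  shows "steered_coherence (id_tensor \<Lambda> \<rho>) \<le> steered_coherence \<rho>"
proof (rule steered_coherence_id_tensor_le[OF assms(2)])
  fix \<xi> assume \<xi>: "\<xi> \<in> eigenbases \<rho>"
  obtain m where m: "sqnorm m = 1" "cross (bloch_map (bloch (\<xi> False))) m = 0"
    using ex_unit_cross_eq_0 by blast
  then obtain \<eta> where \<eta>: "orthonormal_basis \<eta>"
    and axis: "cross (bloch_map (bloch (\<xi> False))) (bloch (\<eta> False)) = 0"
    using ex_orthonormal_basis_bloch by metis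
  have "positive_steering \<rho>"
    using assms(2) by (simp add: density_def positive_steering_psd)
  then show "\<exists>\<eta>\<in>eigenbases (id_tensor \<Lambda> \<rho>).
      \<forall>M\<in>steering_elems \<rho>. steered_l1 (id_tensor \<Lambda> \<rho>) \<eta> M \<le> steered_l1 \<rho> \<xi> M"
    using eigenbasis_id_tensor_unital[OF assms \<xi> \<eta> axis]
      steered_l1_id_tensor_le_unital[OF assms(1) _ orthonormal_basis_eigenbases[OF \<xi>] \<eta> axis]
    by blast
qed

lemma semi_classicalE:
  assumes "semi_classical \<Lambda>"
  obtains e where "orthonormal_basis e" "\<And>X. psd X \<Longrightarrow> 0 < Re (trace X) \<Longrightarrow> \<exists>p. \<Lambda> X = spectral p e"
proof -
  obtain e where e: "orthonormal_basis e"
    and dens: "\<And>\<sigma>. density \<sigma> \<Longrightarrow> \<exists>p. \<Lambda> \<sigma> = spectral p e"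
    using assms unfolding semi_classical_def spectral_def by metis
  have "\<exists>p. \<Lambda> X = spectral p e" if X: "psd X" "0 < Re (trace X)" for X
  proof -
    define t where "t = Re (trace X)"
    have "trace X = of_real t"
      using hermitianE[OF psd_hermitian[OF X(1)]] by (metis t_def Re_complex_of_real trace_pauli_mat)
    have t: "0 < t"
      using X(2) by (simp add: t_def)
    have "trace (\<lambda>i j. of_real (1 / t) * X i j) = of_real (1 / t) * trace X"
      by (simp add: trace_bool distrib_left)
    also have "\<dots> = 1"
      using \<open>trace X = of_real t\<close> t by (simp flip: of_real_mult)
    moreover have "psd (\<lambda>i j. of_real (1 / t) * X i j)"
      using t X(1) by (intro psd_scale) simp_all
    ultimately have "density (\<lambda>i j. of_real (1 / t) * X i j)"
      by (simp add: density_def)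
    then obtain p where p: "\<Lambda> (\<lambda>i j. of_real (1 / t) * X i j) = spectral p e"
      using dens by blast
    have "X = (\<lambda>i j. of_real t * (of_real (1 / t) * X i j))"
      using t by (simp add: mult.assoc[symmetric] flip: of_real_mult)
    then have "\<Lambda> X = (\<lambda>i j. of_real t * spectral p e i j)"
      by (metis p map_scale)
    then show ?thesis
      by (auto simp: spectral_scale)
  qed
  with e show thesis
    by (rule that)
qed

lemma steered_coherence_id_tensor_le_semi_classical:
  assumes "semi_classical \<Lambda>" "density \<rho>"
  shows "steered_coherence (id_tensor \<Lambda> \<rho>) \<le> steered_coherence \<rho>"
proof (rule steered_coherence_id_tensor_le[OF assms(2)])
  obtain e where e: "orthonormal_basis e"
    and diag: "\<And>X. psd X \<Longrightarrow> 0 < Re (trace X) \<Longrightarrow> \<exists>p. \<Lambda> X = spectral p e"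
    using semi_classicalE[OF assms(1)] by blast
  have "psd (ptrA \<rho>)" "Re (trace (ptrA \<rho>)) = 1"
    using assms(2) by (simp_all add: density_def psd_ptrA trace_ptrA)
  then have "e \<in> eigenbases (id_tensor \<Lambda> \<rho>)"
    using diag[of "ptrA \<rho>"] by (auto simp: eigenbases_def ptrA_id_tensor eigenbasis_spectral[OF e])
  moreover have "steered_l1 (id_tensor \<Lambda> \<rho>) e M \<le> steered_l1 \<rho> \<xi> M"
    if \<xi>: "\<xi> \<in> eigenbases \<rho>" and M: "M \<in> steering_elems \<rho>" for \<xi> M
  proof -
    have "psd (steered M \<rho>)" "0 < Re (trace (steered M \<rho>))"
      using M positive_steering_psd[of \<rho>] assms(2)
      by (auto simp: steering_elems_def positive_steering_def density_def prob_M_eq)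
    then have "steered_l1 (id_tensor \<Lambda> \<rho>) e M = 0"
      using diag l1_coherence_spectral[OF e] by (metis steered_l1_id_tensor mult_zero_right)
    then show ?thesis
      using steered_l1_bounds(1)[OF _ orthonormal_basis_eigenbases[OF \<xi>] M] assms(2)
      by (simp add: density_def positive_steering_psd)
  qed
  ultimately show "\<exists>\<eta>\<in>eigenbases (id_tensor \<Lambda> \<rho>).
      \<forall>M\<in>steering_elems \<rho>. steered_l1 (id_tensor \<Lambda> \<rho>) \<eta> M \<le> steered_l1 \<rho> \<xi> M"
    if "\<xi> \<in> eigenbases \<rho>" for \<xi>
    using that by blast
qed

text \<open>If the Bloch map only ever moves states along the axis of the shift, every output is
  diagonal in the eigenbasis of that axis.\<close>
lemma semi_classicalI:
  assumes shift: "bloch_shift \<noteq> 0"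
    and parallel: "\<And>x. cross bloch_shift (bloch_map x) = 0"
  shows "semi_classical \<Lambda>"
proof -
  define m where "m = (1 / sqrt (sqnorm bloch_shift)) *\<^sub>R bloch_shift"
  have m: "sqnorm m = 1"
    using sqnorm_normalize[OF shift] by (simp add: m_def)
  obtain e where e: "orthonormal_basis e" "bloch (e False) = m"
    using ex_orthonormal_basis_bloch[OF m] by blast
  have "\<exists>p. (\<forall>k. p k \<ge> 0) \<and> (\<Sum>k\<in>UNIV. p k) = 1 \<and> \<Lambda> \<sigma> = spectral p e"
    if \<sigma>: "density \<sigma>" for \<sigma>
  proof -
    define w where "w = (1 / 2) *\<^sub>R bloch_shift + bloch_map (pauli_vec \<sigma>)"
    have \<Lambda>\<sigma>: "\<Lambda> \<sigma> = pauli_mat (1 / 2) w"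
      by (subst density_eq_pauli_mat[OF \<sigma>]) (simp add: apply_pauli_mat w_def)
    have "cross w bloch_shift = 0"
      using parallel[of "pauli_vec \<sigma>"] by (simp add: w_def cross_commute[of _ bloch_shift])
    then have "cross w m = 0"
      by (simp add: m_def)
    then obtain s where w: "w = s *\<^sub>R bloch (e False)"
      using cross_eq_0_imp_parallel[OF m] e(2) by metis
    have "psd (\<Lambda> \<sigma>)"
      using \<sigma> by (simp add: density_def psd_preserving)
    then have "\<bar>s\<bar> \<le> 1 / 2"
      using m by (simp add: \<Lambda>\<sigma> w e(2) psd_pauli_mat_iff real_sqrt_mult)
    moreover have "\<Lambda> \<sigma> = spectral (\<lambda>k. if k then 1 / 2 - s else 1 / 2 + s) e"
      by (simp add: \<Lambda>\<sigma> w pauli_mat_spectral[OF e(1)])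
    ultimately show ?thesis
      by (intro exI[of _ "\<lambda>k. if k then 1 / 2 - s else 1 / 2 + s"]) (auto simp: sum_UNIV_bool)
  qed
  then show ?thesis
    using e(1) unfolding semi_classical_def spectral_def by blast
qed

lemma eigenbases_id_tensor_cq_state:
  assumes v: "ket_sqnorm v = 1" and \<eta>: "\<eta> \<in> eigenbases (id_tensor \<Lambda> (cq_state v))"
  shows "cross bloch_shift (bloch (\<eta> False)) = 0"
proof -
  have "ptrA (id_tensor \<Lambda> (cq_state v)) = pauli_mat (1 / 2) ((1 / 2) *\<^sub>R bloch_shift)"
    using linear_0[OF linear_bloch_map] by (simp add: ptrA_id_tensor ptrA_cq_state[OF v] apply_pauli_mat)
  then have "cross ((1 / 2) *\<^sub>R bloch_shift) (bloch (\<eta> False)) = 0"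
    using \<eta> eigenbasis_pauli_mat_iff[OF orthonormal_basis_eigenbases[OF \<eta>]] by (simp add: eigenbases_def)
  then show ?thesis
    by simp
qed

text \<open>After the channel, Alice's outcome \<open>|0\<rangle>\<langle>0|\<close> steers Bob to \<open>(\<one> + (t + T u) \<cdot> \<sigma>) / 4\<close>, whose
  component transverse to the forced eigenbasis axis \<open>t\<close> is that of \<open>T u\<close>.\<close>
lemma steered_coherence_id_tensor_cq_state:
  assumes v: "ket_sqnorm v = 1" and shift: "bloch_shift \<noteq> 0"
  shows "sqrt (sqnorm (cross (bloch_map (bloch v)) bloch_shift) / sqnorm bloch_shift)
           \<le> steered_coherence (id_tensor \<Lambda> (cq_state v))"
  unfolding steered_coherence_eq
proof (rule cINF_greatest)
  show "eigenbases (id_tensor \<Lambda> (cq_state v)) \<noteq> {}"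
    using density_cq_state[OF v]
    by (simp add: density_def eigenbases_nonempty psd_ptrA ptrA_id_tensor psd_preserving)
next
  fix \<eta> assume \<eta>: "\<eta> \<in> eigenbases (id_tensor \<Lambda> (cq_state v))"
  have onb: "orthonormal_basis \<eta>"
    using orthonormal_basis_eigenbases[OF \<eta>] .
  define n where "n = bloch (\<eta> False)"
  have n: "sqnorm n = 1" and axis: "cross bloch_shift n = 0"
    using sqnorm_bloch_basis[OF onb] eigenbases_id_tensor_cq_state[OF v \<eta>] by (simp_all add: n_def)
  have "sqrt (sqnorm (cross (bloch_map (bloch v)) bloch_shift) / sqnorm bloch_shift)
      = sqrt (sqnorm (cross (bloch_map (bloch v)) n))"
    using sqnorm_cross_parallel[OF n axis, of "bloch_map (bloch v)"] shift by simp
  also have "\<dots> = steered_l1 (id_tensor \<Lambda> (cq_state v)) \<eta> ket0_proj"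
    using onb axis
    by (simp add: steered_l1_id_tensor prob_M_eq steered_ket0_proj_cq_state v apply_pauli_mat
        l1_coherence_pauli_mat n_def linear_scale[OF linear_bloch_map] real_sqrt_mult)
  also have "\<dots> \<le> max_steered_l1 (id_tensor \<Lambda> (cq_state v)) \<eta>"
    unfolding max_steered_l1_def
  proof (rule cSUP_upper)
    show "ket0_proj \<in> steering_elems (id_tensor \<Lambda> (cq_state v))"
      unfolding steering_elems_id_tensor
      by (simp add: steering_elems_def povm_elem_ket0_proj prob_M_eq steered_ket0_proj_cq_state v)
    show "bdd_above (steered_l1 (id_tensor \<Lambda> (cq_state v)) \<eta> ` steering_elems (id_tensor \<Lambda> (cq_state v)))"
      using density_cq_state[OF v] onb
      by (intro bdd_above_steered_l1) (simp_all add: density_def positive_steering_id_tensor)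
  qed
  finally show "sqrt (sqnorm (cross (bloch_map (bloch v)) bloch_shift) / sqnorm bloch_shift)
      \<le> max_steered_l1 (id_tensor \<Lambda> (cq_state v)) \<eta>" .
qed

lemma steered_coherence_increase:
  assumes shift: "bloch_shift \<noteq> 0" and x: "cross bloch_shift (bloch_map x) \<noteq> 0"
  shows "\<exists>v. ket_sqnorm v = 1 \<and> steered_coherence (cq_state v) < steered_coherence (id_tensor \<Lambda> (cq_state v))"
proof -
  have "x \<noteq> 0"
    using x linear_0[OF linear_bloch_map] by auto
  then obtain v where v: "ket_sqnorm v = 1" "bloch v = (1 / sqrt (sqnorm x)) *\<^sub>R x"
    using bloch_surj sqnorm_normalize by blast
  have "cross (bloch_map (bloch v)) bloch_shift \<noteq> 0"
    using x \<open>x \<noteq> 0\<close> by (simp add: v linear_scale[OF linear_bloch_map] cross_commute[of _ bloch_shift])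
  then have "0 < sqrt (sqnorm (cross (bloch_map (bloch v)) bloch_shift) / sqnorm bloch_shift)"
    using shift by (simp add: sqnorm_pos_iff)
  then have "steered_coherence (cq_state v) < steered_coherence (id_tensor \<Lambda> (cq_state v))"
    using steered_coherence_cq_state[OF v(1)] steered_coherence_id_tensor_cq_state[OF v(1) shift]
    by linarith
  with v(1) show ?thesis
    by blast
qed

end

theorem theorem1:
  fixes \<Lambda> :: "bool cmat \<Rightarrow> bool cmat"
  assumes "qubit_channel \<Lambda>"
  shows "(\<exists>\<rho> :: (bool \<times> bool) cmat. density \<rho> \<and>
            steered_coherence (id_tensor \<Lambda> \<rho>) > steered_coherence \<rho>)
         \<longleftrightarrow> \<not> unital \<Lambda> \<and> \<not> semi_classical \<Lambda>"
proof -
  interpret channel \<Lambda>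
    using assms by (rule channel.intro)
  show ?thesis
  proof
    assume "\<exists>\<rho> :: (bool \<times> bool) cmat. density \<rho> \<and>
      steered_coherence (id_tensor \<Lambda> \<rho>) > steered_coherence \<rho>"
    then show "\<not> unital \<Lambda> \<and> \<not> semi_classical \<Lambda>"
      using steered_coherence_id_tensor_le_unital steered_coherence_id_tensor_le_semi_classical
      by force
  next
    assume "\<not> unital \<Lambda> \<and> \<not> semi_classical \<Lambda>"
    then obtain x where "bloch_shift \<noteq> 0" "cross bloch_shift (bloch_map x) \<noteq> 0"
      using unital_iff_bloch_shift semi_classicalI by blast
    then show "\<exists>\<rho> :: (bool \<times> bool) cmat. density \<rho> \<and>
      steered_coherence (id_tensor \<Lambda> \<rho>) > steered_coherence \<rho>"
      using steered_coherence_increase density_cq_state by blast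
  qed
qed

end
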